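(* Under the standing assumptions below, for every $h>0$ and every $r\in(0,1)$, $$c_*(h)<\frac{1}{hr}\ln\Big(\frac{p}{1-r^2}\int_{\mathbb R}K(s)e^{-rs}\,ds\Big).$$
   Context: Let $K:\mathbb R\to[0,\infty)$ be measurable with $K(s)=K(-s)$ for all $s\in\mathbb R$, $\int_{\mathbb R}K(s)\,ds=1$, and $\int_{\mathbb R}K(s)e^{\lambda s}ds<\infty$ for every $\lambda\in\mathbb R$. Fix $p>1$. For $h\ge0$, $z\in\mathbb R$, $\varepsilon>0$ set $$\psi_h(z,\varepsilon)=\varepsilon z^2-z-1+p\,e^{-zh}\int_{\mathbb R}K(s)e^{-\sqrt{\varepsilon}\,zs}\,ds .$$ Standing fact (known, assumed): for every $h\ge0$ there is exactly one pair $(z_0(h),\varepsilon_0(h))$ with $z_0(h)>0$, $\varepsilon_0(h)>0$ satisfying $\psi_h(z_0,\varepsilon_0)=0$ and $\partial_z\psi_h(z_0,\varepsilon_0)=0$; moreover $\varepsilon_0(h)$ is the largest $\varepsilon>0$ for which $\psi_h(\cdot,\varepsilon)$ has a positive zero, and $\psi_h(z,\varepsilon)>0$ for all $z>0$ whenever $\varepsilon>\varepsilon_0(h)$. Define $c_*(h)=1/\sqrt{\varepsilon_0(h)}$. *)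

theory Defs
  imports "HOL-Analysis.Analysis"
begin

definition psi :: "(real \<Rightarrow> real) \<Rightarrow> real \<Rightarrow> real \<Rightarrow> real \<Rightarrow> real \<Rightarrow> real" where
  "psi K p h z \<epsilon> = \<epsilon> * z\<^sup>2 - z - 1
      + p * exp (- z * h) * (LINT s|lborel. K s * exp (- sqrt \<epsilon> * z * s))"

definition double_root :: "(real \<Rightarrow> real) \<Rightarrow> real \<Rightarrow> real \<Rightarrow> real \<times> real \<Rightarrow> bool" where
  "double_root K p h ze \<longleftrightarrow> (case ze of (z, \<epsilon>) \<Rightarrow>
      z > 0 \<and> \<epsilon> > 0 \<and> psi K p h z \<epsilon> = 0 \<and>
      ((\<lambda>w. psi K p h w \<epsilon>) has_real_derivative 0) (at z))"

definition eps0 :: "(real \<Rightarrow> real) \<Rightarrow> real \<Rightarrow> real \<Rightarrow> real" where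
  "eps0 K p h = snd (THE ze. double_root K p h ze)"

definition c_star :: "(real \<Rightarrow> real) \<Rightarrow> real \<Rightarrow> real \<Rightarrow> real" where
  "c_star K p h = 1 / sqrt (eps0 K p h)"

definition standing_fact :: "(real \<Rightarrow> real) \<Rightarrow> real \<Rightarrow> bool" where
  "standing_fact K p \<longleftrightarrow> (\<forall>h\<ge>0.
      (\<exists>!ze. double_root K p h ze) \<and>
      (eps0 K p h = (GREATEST \<epsilon>. \<epsilon> > 0 \<and> (\<exists>z>0. psi K p h z \<epsilon> = 0))) \<and>
      (\<exists>z>0. psi K p h z (eps0 K p h) = 0) \<and>
      (\<forall>\<epsilon>>eps0 K p h. \<forall>z>0. psi K p h z \<epsilon> > 0))"

end

theory Submission
  imports Defs
begin

text \<open>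
  Fix \<open>r > 0\<close> and write \<open>I = \<integral> K(s) e^{-rs} ds\<close>.  Along the curve
  \<open>z = r d\<close>, \<open>\<epsilon> = 1/d\<^sup>2\<close> (\<open>d > 0\<close>) we have \<open>\<surd>\<epsilon> z = r\<close>, so the integral in \<open>\<psi>\<^sub>h\<close> is the
  constant \<open>I\<close> and \<open>\<psi>\<^sub>h(r d, 1/d\<^sup>2) = r\<^sup>2 - r d - 1 + p e^{-rhd} I\<close> is an explicit
  continuous function of \<open>d\<close>.  For \<open>0 < d < c\<^sub>*(h)\<close> we have \<open>1/d\<^sup>2 > \<epsilon>\<^sub>0(h)\<close>, so the
  standing fact makes this function positive; letting \<open>d \<rightarrow> c\<^sub>*(h)\<close> from the left gives
  \<open>p I e^{-rhc\<^sub>*} \<ge> 1 - r\<^sup>2 + r c\<^sub>* > 1 - r\<^sup>2\<close>.  Taking logarithms yields the bound.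
\<close>

lemma psi_on_curve:
  fixes d r :: real
  assumes "d > 0"
  shows "psi K p h (r * d) (1 / d\<^sup>2)
           = r\<^sup>2 - r * d - 1 + p * exp (- r * h * d) * (LINT s|lborel. K s * exp (- r * s))"
proof -
  have "sqrt (1 / d\<^sup>2) * (r * d) = r"
    using assms by (simp add: real_sqrt_divide)
  hence integral: "(LINT s|lborel. K s * exp (- sqrt (1 / d\<^sup>2) * (r * d) * s))
                     = (LINT s|lborel. K s * exp (- r * s))"
    by (metis mult_minus_left)
  have "1 / d\<^sup>2 * (r * d)\<^sup>2 = r\<^sup>2"
    using assms by (simp add: power2_eq_square)
  thus ?thesis
    unfolding psi_def integral by (simp add: algebra_simps)
qed

lemma standing_fact_eps0:
  assumes "standing_fact K p" and "h \<ge> 0"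
  shows "eps0 K p h > 0"
    and "\<And>\<epsilon> z. \<epsilon> > eps0 K p h \<Longrightarrow> z > 0 \<Longrightarrow> psi K p h z \<epsilon> > 0"
proof -
  have "\<exists>!ze. double_root K p h ze"
    using assms unfolding standing_fact_def by blast
  hence "double_root K p h (THE ze. double_root K p h ze)"
    by (rule theI')
  thus "eps0 K p h > 0"
    unfolding eps0_def double_root_def by (auto split: prod.splits)
next
  fix \<epsilon> z :: real
  assume "\<epsilon> > eps0 K p h" and "z > 0"
  thus "psi K p h z \<epsilon> > 0"
    using assms unfolding standing_fact_def by blast
qed

text \<open>Main estimate: \<open>\<psi>\<^sub>h\<close> is nonnegative at the point \<open>(r c\<^sub>*(h), \<epsilon>\<^sub>0(h))\<close>, obtained as
  the left limit of the positive values on the curve \<open>z = r d\<close>, \<open>\<epsilon> = 1/d\<^sup>2\<close>, \<open>d < c\<^sub>*(h)\<close>.\<close>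
lemma c_star_curve_estimate:
  fixes r :: real
  assumes "standing_fact K p" and "h \<ge> 0" and "r > 0"
  defines "c \<equiv> c_star K p h" and "I \<equiv> LINT s|lborel. K s * exp (- r * s)"
  shows "1 - r\<^sup>2 + r * c \<le> p * I * exp (- r * h * c)"
proof -
  define g where "g d = p * I * exp (- r * h * d) - (1 - r\<^sup>2 + r * d)" for d
  have eps0_pos: "eps0 K p h > 0"
    using standing_fact_eps0(1)[OF assms(1,2)] .
  hence c_pos: "c > 0" and c_eq: "eps0 K p h = 1 / c\<^sup>2"
    unfolding c_def c_star_def by (auto simp: power_divide)
  have g_pos: "g d > 0" if "0 < d" "d < c" for d
  proof -
    have "1 / d\<^sup>2 > eps0 K p h"
      unfolding c_eq using that by (simp add: frac_less2 power_strict_mono)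
    hence "psi K p h (r * d) (1 / d\<^sup>2) > 0"
      using standing_fact_eps0(2)[OF assms(1,2)] that assms(3) by simp
    thus ?thesis
      unfolding psi_on_curve[OF \<open>0 < d\<close>] g_def I_def by (simp add: algebra_simps)
  qed
  have "(g \<longlongrightarrow> g c) (at_left c)"
    unfolding g_def by (intro tendsto_intros)
  moreover have "\<forall>\<^sub>F d in at_left c. 0 \<le> g d"
    using c_pos g_pos by (auto simp: eventually_at_left intro!: less_imp_le)
  ultimately have "0 \<le> g c"
    by (rule tendsto_lowerbound) simp
  thus ?thesis
    unfolding g_def by simp
qed

theorem mainTheorem5:
  fixes K :: "real \<Rightarrow> real" and p h r :: real
  assumes K_meas: "K \<in> borel_measurable borel"
    and K_nonneg: "\<And>s. K s \<ge> 0"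
    and K_sym: "\<And>s. K s = K (- s)"
    and K_int: "(LINT s|lborel. K s) = 1"
    and K_exp: "\<And>a. integrable lborel (\<lambda>s. K s * exp (a * s))"
    and p_gt: "p > 1"
    and standing: "standing_fact K p"
    and h_pos: "h > 0"
    and r_pos: "0 < r" and r_lt: "r < 1"
  shows "c_star K p h < 1 / (h * r) * ln (p / (1 - r\<^sup>2) * (LINT s|lborel. K s * exp (- r * s)))"
proof -
  define c where "c = c_star K p h"
  define I where "I = (LINT s|lborel. K s * exp (- r * s))"
  have "c > 0"
    using standing_fact_eps0(1)[OF standing] h_pos unfolding c_def c_star_def by simp
  have "r\<^sup>2 < 1"
    using r_pos r_lt by (simp add: abs_square_less_1)
  hence r2_pos: "1 - r\<^sup>2 > 0"
    by simp
  have "(1 - r\<^sup>2) * exp (r * h * c) < (1 - r\<^sup>2 + r * c) * exp (r * h * c)"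
    using r_pos \<open>c > 0\<close> by simp
  also have "\<dots> \<le> p * I * exp (- r * h * c) * exp (r * h * c)"
    using c_star_curve_estimate[OF standing less_imp_le[OF h_pos] r_pos] unfolding c_def I_def
    by (simp add: mult.assoc)
  also have "\<dots> = p * I"
    by (simp flip: exp_add)
  finally have "exp (r * h * c) < p / (1 - r\<^sup>2) * I"
    using r2_pos by (simp add: field_simps)
  hence "r * h * c < ln (p / (1 - r\<^sup>2) * I)"
    by (metis exp_gt_zero ln_exp ln_less_cancel_iff order.strict_trans)
  thus ?thesis
    unfolding c_def[symmetric] I_def[symmetric] using r_pos h_pos by (simp add: field_simps)
qed

end
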